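(* Let $A\in P(n)$ with $A_{ii}>0$ for all $i$, and let $N$ be a unitarily invariant norm on $M_n$ with $N(E_{11})=1$. Let $D(A)=A\circ I$ be the diagonal part of $A$. Then $$I(N,A)\ge I(N,D(A))=N'(D(A)^{-1})^{-1}=\Phi'(A_{11}^{-1},\dots,A_{nn}^{-1})^{-1}>0.$$
   Context: $M_n$ is the set of complex $n\times n$ matrices, $P(n)$ the positive semidefinite ones, $\circ$ the Hadamard product, $I$ the identity, $E_{11}$ the $(1,1)$ matrix unit. $I(N,A)=\min\{N(A\circ B): B\in P(n),\ N(B)=1\}$. $\Phi$ is the symmetric gauge function on $\mathbb R^n$ with $N(X)=\Phi(s_1(X),\dots,s_n(X))$, $\Phi'$ its dual norm on $\mathbb R^n$, and $N'$ the dual norm of $N$, $N'(X)=\max\{|\operatorname{tr}(XY^* )|: N(Y)\le 1\}$. *)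

theory Defs
  imports "HOL-Analysis.Analysis"
begin

text \<open>Complex n x n matrices are rendered as complex^'n^'n, where the index type 'n is
finite (n = CARD('n)) and well-ordered, so that it has a first index (used for E_11).\<close>

definition first_idx :: "'n::{finite,wellorder}" where
  "first_idx = (LEAST i. True)"

definition adj :: "complex^'n^'n \<Rightarrow> complex^'n^'n" where
  "adj X = (\<chi> i j. cnj (X $ j $ i))"

definition unitary_mat :: "complex^'n^'n \<Rightarrow> bool" where
  "unitary_mat U \<longleftrightarrow> adj U ** U = mat 1 \<and> U ** adj U = mat 1"

definition cquad :: "complex^'n^'n \<Rightarrow> complex^'n \<Rightarrow> complex" where
  "cquad A x = (\<Sum>i\<in>UNIV. cnj (x $ i) * (A *v x) $ i)"

definition psd :: "complex^'n^'n \<Rightarrow> bool" where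
  "psd A \<longleftrightarrow> (\<forall>x. Im (cquad A x) = 0 \<and> Re (cquad A x) \<ge> 0)"

definition hadamard :: "complex^'n^'n \<Rightarrow> complex^'n^'n \<Rightarrow> complex^'n^'n" where
  "hadamard A B = (\<chi> i j. A $ i $ j * B $ i $ j)"

definition E11 :: "complex^('n::{finite,wellorder})^('n::{finite,wellorder})" where
  "E11 = (\<chi> i j. if i = first_idx \<and> j = first_idx then 1 else 0)"

definition ctrace :: "complex^'n^'n \<Rightarrow> complex" where
  "ctrace X = (\<Sum>i\<in>UNIV. X $ i $ i)"

definition cdiag :: "real^'n \<Rightarrow> complex^'n^'n" where
  "cdiag s = (\<chi> i j. if i = j then complex_of_real (s $ i) else 0)"

definition unitarily_invariant_norm :: "(complex^'n^'n \<Rightarrow> real) \<Rightarrow> bool" where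
  "unitarily_invariant_norm N \<longleftrightarrow>
     (\<forall>X. N X \<ge> 0) \<and> (\<forall>X. N X = 0 \<longleftrightarrow> X = 0) \<and>
     (\<forall>c X. N (c *\<^sub>R X) = \<bar>c\<bar> * N X) \<and>
     (\<forall>c X. N ((\<chi> i j. c * X $ i $ j)) = cmod c * N X) \<and>
     (\<forall>X Y. N (X + Y) \<le> N X + N Y) \<and>
     (\<forall>U V X. unitary_mat U \<longrightarrow> unitary_mat V \<longrightarrow> N (U ** X ** V) = N X)"

definition dual_mat_norm :: "(complex^'n^'n \<Rightarrow> real) \<Rightarrow> complex^'n^'n \<Rightarrow> real" where
  "dual_mat_norm N X = Sup {cmod (ctrace (X ** adj Y)) | Y. N Y \<le> 1}"

definition symmetric_gauge_function :: "(real^'n \<Rightarrow> real) \<Rightarrow> bool" where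
  "symmetric_gauge_function \<Phi> \<longleftrightarrow>
     (\<forall>x. \<Phi> x \<ge> 0) \<and> (\<forall>x. \<Phi> x = 0 \<longleftrightarrow> x = 0) \<and>
     (\<forall>c x. \<Phi> (c *\<^sub>R x) = \<bar>c\<bar> * \<Phi> x) \<and>
     (\<forall>x y. \<Phi> (x + y) \<le> \<Phi> x + \<Phi> y) \<and>
     (\<forall>p x. p permutes (UNIV :: 'n set) \<longrightarrow> \<Phi> (\<chi> i. x $ p i) = \<Phi> x) \<and>
     (\<forall>e x. (\<forall>i. e $ i = 1 \<or> e $ i = -1) \<longrightarrow> \<Phi> (\<chi> i. e $ i * x $ i) = \<Phi> x)"

definition dual_gauge :: "(real^'n \<Rightarrow> real) \<Rightarrow> real^'n \<Rightarrow> real" where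
  "dual_gauge \<Phi> x = Sup {\<bar>x \<bullet> y\<bar> | y. \<Phi> y \<le> 1}"

definition is_singular_values :: "real^'n \<Rightarrow> complex^'n^'n \<Rightarrow> bool" where
  "is_singular_values s X \<longleftrightarrow> (\<forall>i. s $ i \<ge> 0) \<and>
     (\<exists>U V. unitary_mat U \<and> unitary_mat V \<and> X = U ** cdiag s ** V)"

definition gauge_of_norm :: "(complex^'n^'n \<Rightarrow> real) \<Rightarrow> (real^'n \<Rightarrow> real) \<Rightarrow> bool" where
  "gauge_of_norm N \<Phi> \<longleftrightarrow> (\<forall>X s. is_singular_values s X \<longrightarrow> N X = \<Phi> s)"

definition I_NA :: "(complex^'n^'n \<Rightarrow> real) \<Rightarrow> complex^'n^'n \<Rightarrow> real" where
  "I_NA N A = Inf {N (hadamard A B) | B. psd B \<and> N B = 1}"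

definition diag_part :: "complex^'n^'n \<Rightarrow> complex^'n^'n" where
  "diag_part A = hadamard A (mat 1)"

end

theory Submission
  imports Defs
begin

text \<open>
  For psd \<open>B\<close> one has \<open>N(B) \<le> tr(B) N(E\<^sub>1\<^sub>1)\<close>: a Cholesky step writes \<open>B\<close> as a psd
  matrix with one more vanishing row plus a rank-one \<open>v v\<^sup>*\<close>, and \<open>v v\<^sup>*\<close> is unitarily
  similar to \<open>\<parallel>v\<parallel>\<^sup>2 E\<^sub>1\<^sub>1\<close>. If the diagonal of \<open>M\<close> is \<open>D = diag(d)\<close> with \<open>d > 0\<close>, the
  diagonal of \<open>M \<circ> B\<close> is \<open>D\<close> times that of \<open>B\<close>, so \<open>tr(B)\<close> is the conjugate of
  \<open>tr(D\<^sup>-\<^sup>1 (M \<circ> B)\<^sup>*)\<close>. Pinching (averaging \<open>Y\<close> over its conjugates by diagonal sign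
  matrices) gives \<open>|tr(D\<^sup>-\<^sup>1 Y\<^sup>*)| \<le> \<Phi>'(1/d) N(diag Y) \<le> \<Phi>'(1/d) N(Y)\<close>, which both
  identifies \<open>N'(D\<^sup>-\<^sup>1)\<close> with \<open>\<Phi>'(1/d)\<close> and yields \<open>N(M \<circ> B) \<ge> 1/\<Phi>'(1/d)\<close> whenever
  \<open>N(B) = 1\<close>. For \<open>M = D\<close> the bound is attained: \<open>B = w w\<^sup>*\<close> with \<open>|w\<^sub>i|\<^sup>2\<close>
  proportional to \<open>|y\<^sub>i| / d\<^sub>i\<close>, where \<open>y\<close> runs over the unit ball of \<open>\<Phi>\<close>, makes
  \<open>D \<circ> B\<close> a multiple of \<open>diag |y|\<close>.
\<close>

section \<open>Diagonal and unitary matrices\<close>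

definition diag_mat :: "('n \<Rightarrow> complex) \<Rightarrow> complex^'n^'n" where
  "diag_mat d = (\<chi> i j. if i = j then d i else 0)"

definition outer :: "complex^'n \<Rightarrow> complex^'n^'n" where
  "outer v = (\<chi> i j. v $ i * cnj (v $ j))"

definition of_real_mat :: "real^'n^'m \<Rightarrow> complex^'n^'m" where
  "of_real_mat P = (\<chi> i j. complex_of_real (P $ i $ j))"

lemma sum_UNIV_single:
  fixes f :: "'a::finite \<Rightarrow> 'b::comm_monoid_add"
  assumes "\<And>b. b \<noteq> k \<Longrightarrow> f b = 0"
  shows "(\<Sum>b\<in>UNIV. f b) = f k"
  using assms by (subst sum.remove[of UNIV k]) (auto intro: sum.neutral)

lemma matrix_mult_nth: "(X ** Y) $ i $ j = (\<Sum>k\<in>UNIV. X $ i $ k * Y $ k $ j)"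
  by (simp add: matrix_matrix_mult_def)

lemma diag_mat_nth_same [simp]: "diag_mat d $ i $ i = d i"
  by (simp add: diag_mat_def)

lemma diag_mat_mult_left: "(diag_mat d ** X) $ i $ j = d i * X $ i $ j"
  unfolding matrix_mult_nth by (subst sum_UNIV_single[where k = i]) (auto simp: diag_mat_def)

lemma diag_mat_mult_right: "(X ** diag_mat d) $ i $ j = X $ i $ j * d j"
  unfolding matrix_mult_nth by (subst sum_UNIV_single[where k = j]) (auto simp: diag_mat_def)

lemma diag_mat_mult_diag_mat: "diag_mat d ** diag_mat e = diag_mat (\<lambda>i. d i * e i)"
  by (simp add: vec_eq_iff diag_mat_mult_left) (simp add: diag_mat_def)

lemma diag_mat_one: "diag_mat (\<lambda>i. 1) = mat 1"
  by (simp add: vec_eq_iff diag_mat_def mat_def)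

lemma cdiag_eq_diag_mat: "cdiag s = diag_mat (\<lambda>i. complex_of_real (s $ i))"
  by (simp add: cdiag_def diag_mat_def)

lemma adj_nth [simp]: "adj X $ i $ j = cnj (X $ j $ i)"
  by (simp add: adj_def)

lemma adj_adj [simp]: "adj (adj X) = X"
  by (simp add: adj_def vec_eq_iff)

lemma adj_one [simp]: "adj (mat 1) = mat 1"
  by (simp add: vec_eq_iff mat_def)

lemma adj_mult: "adj (X ** Y) = adj Y ** adj X"
  by (simp add: vec_eq_iff matrix_mult_nth mult.commute)

lemma adj_diag_mat: "adj (diag_mat d) = diag_mat (\<lambda>i. cnj (d i))"
  by (simp add: vec_eq_iff diag_mat_def)

lemma adj_of_real_mat: "adj (of_real_mat P) = of_real_mat (transpose P)"
  by (simp add: of_real_mat_def vec_eq_iff transpose_def)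

lemma of_real_mat_mult: "of_real_mat (P ** R) = of_real_mat P ** of_real_mat R"
  by (simp add: of_real_mat_def vec_eq_iff matrix_mult_nth)

lemma of_real_mat_one: "of_real_mat (mat 1) = mat 1"
  by (simp add: of_real_mat_def vec_eq_iff mat_def)

lemma mult_diag_mat_mult_adj_nth:
  "(U ** diag_mat e ** adj V) $ i $ j = (\<Sum>k\<in>UNIV. U $ i $ k * e k * cnj (V $ j $ k))"
  by (subst matrix_mult_nth) (simp add: diag_mat_mult_right)

lemma ctrace_diag_mat_mult_adj: "ctrace (diag_mat d ** adj Y) = (\<Sum>i\<in>UNIV. d i * cnj (Y $ i $ i))"
  by (simp add: ctrace_def diag_mat_mult_left)

lemma unitary_mat_one: "unitary_mat (mat 1)"
  by (simp add: unitary_mat_def)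

lemma unitary_adj: "unitary_mat U \<Longrightarrow> unitary_mat (adj U)"
  by (simp add: unitary_mat_def)

lemma unitary_mult:
  assumes U: "unitary_mat U" and V: "unitary_mat V"
  shows "unitary_mat (U ** V)"
proof -
  have "adj (U ** V) ** (U ** V) = adj V ** (adj U ** U) ** V"
    by (simp add: adj_mult matrix_mul_assoc)
  moreover have "(U ** V) ** adj (U ** V) = U ** (V ** adj V) ** adj U"
    by (simp add: adj_mult matrix_mul_assoc)
  ultimately show ?thesis
    using U V by (simp add: unitary_mat_def matrix_mul_rid)
qed

lemma unitary_diag_mat:
  assumes "\<And>i. cmod (d i) = 1"
  shows "unitary_mat (diag_mat d)"
proof -
  have "cnj (d i) * d i = 1" for i
    using assms complex_norm_square[of "d i"] by (simp add: mult.commute)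
  then show ?thesis
    unfolding unitary_mat_def adj_diag_mat diag_mat_mult_diag_mat
    by (simp add: diag_mat_one mult.commute)
qed

lemma unitary_of_real_mat: "orthogonal_matrix Q \<Longrightarrow> unitary_mat (of_real_mat Q)"
  unfolding unitary_mat_def orthogonal_matrix_def adj_of_real_mat of_real_mat_mult[symmetric]
  by (simp add: of_real_mat_one)

lemma exists_unit_phase: "\<exists>p. cmod p = 1 \<and> z = p * complex_of_real (cmod z)"
proof (cases "z = 0")
  case False
  then show ?thesis by (intro exI[of _ "z / complex_of_real (cmod z)"]) (simp add: norm_divide)
qed (intro exI[of _ 1], simp)

lemma matrix_inv_cdiag:
  assumes "\<And>i. d $ i \<noteq> 0"
  shows "matrix_inv (cdiag d) = cdiag (\<chi> i. inverse (d $ i))"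
proof -
  let ?D = "cdiag d" and ?E = "cdiag (\<chi> i. inverse (d $ i))"
  have DE: "?D ** ?E = mat 1" "?E ** ?D = mat 1"
    using assms unfolding cdiag_eq_diag_mat diag_mat_mult_diag_mat
    by (auto simp: diag_mat_one[symmetric] fun_eq_iff intro!: arg_cong[where f = diag_mat])
  show ?thesis
    unfolding matrix_inv_def
  proof (rule some_equality)
    fix F assume "?D ** F = mat 1 \<and> F ** ?D = mat 1"
    then have "F = F ** (?D ** ?E)" "?E = (F ** ?D) ** ?E"
      using DE by (simp_all add: matrix_mul_rid matrix_mul_lid)
    then show "F = ?E" by (simp add: matrix_mul_assoc)
  qed (use DE in simp)
qed

section \<open>Positive semidefinite matrices\<close>

definition sesq :: "complex^'n^'n \<Rightarrow> complex^'n \<Rightarrow> complex^'n \<Rightarrow> complex" where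
  "sesq A x y = (\<Sum>i\<in>UNIV. \<Sum>j\<in>UNIV. cnj (x $ i) * A $ i $ j * y $ j)"

lemma cquad_eq_sesq: "cquad A x = sesq A x x"
  by (simp add: cquad_def sesq_def matrix_vector_mult_def sum_distrib_left mult.assoc)

lemma sesq_add_diag: "sesq A (x + y) (x + y) = sesq A x x + sesq A x y + sesq A y x + sesq A y y"
  by (simp add: sesq_def algebra_simps sum.distrib)

lemma sesq_axis_left: "sesq A (axis k c) y = cnj c * (\<Sum>j\<in>UNIV. A $ k $ j * y $ j)"
  unfolding sesq_def
  by (subst sum_UNIV_single[where k = k]) (auto simp: axis_def sum_distrib_left mult.assoc)

lemma sesq_axis_right: "sesq A x (axis k c) = c * (\<Sum>i\<in>UNIV. cnj (x $ i) * A $ i $ k)"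
  unfolding sesq_def sum_distrib_left
  by (rule sum.cong[OF refl], subst sum_UNIV_single[where k = k]) (auto simp: axis_def mult_ac)

lemma sesq_axis_axis: "sesq A (axis k c) (axis l d) = cnj c * d * A $ k $ l"
  unfolding sesq_axis_left by (subst sum_UNIV_single[where k = l]) (auto simp: axis_def)

lemma psdD: "psd A \<Longrightarrow> Im (sesq A x x) = 0 \<and> Re (sesq A x x) \<ge> 0"
  by (simp add: psd_def cquad_eq_sesq)

lemma psd_diag:
  assumes "psd A"
  shows "A $ i $ i = complex_of_real (Re (A $ i $ i))" "Re (A $ i $ i) \<ge> 0"
  using psdD[OF assms, of "axis i 1"] by (simp_all add: sesq_axis_axis complex_eq_iff)

lemma diag_part_psd: "psd A \<Longrightarrow> diag_part A = cdiag (\<chi> i. Re (A $ i $ i))"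
  by (auto simp: diag_part_def hadamard_def cdiag_def vec_eq_iff mat_def dest: psd_diag(1))

lemma psd_hermitian:
  assumes "psd A"
  shows "A $ j $ i = cnj (A $ i $ j)"
proof -
  have sesq_pair: "sesq A (axis i 1 + axis j c) (axis i 1 + axis j c)
      = A $ i $ i + c * A $ i $ j + cnj c * A $ j $ i + cnj c * c * A $ j $ j" for c
    unfolding sesq_add_diag sesq_axis_axis by simp
  have "Im (A $ i $ i + A $ i $ j + A $ j $ i + A $ j $ j) = 0"
    using psdD[OF assms, of "axis i 1 + axis j 1"] sesq_pair[of 1] by simp
  moreover have "Im (A $ i $ i + \<i> * A $ i $ j - \<i> * A $ j $ i + A $ j $ j) = 0"
    using psdD[OF assms, of "axis i 1 + axis j \<i>"] sesq_pair[of \<i>] by simp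
  ultimately show ?thesis
    using psd_diag(1)[OF assms, of i] psd_diag(1)[OF assms, of j]
    by (simp add: complex_eq_iff)
qed

text \<open>If \<open>A\<^sub>k\<^sub>j \<noteq> 0\<close> but \<open>A\<^sub>k\<^sub>k = 0\<close>, the form is negative at \<open>c e\<^sub>k + e\<^sub>j\<close> for
  \<open>c = -t A\<^sub>k\<^sub>j\<close> with \<open>t\<close> large.\<close>
lemma psd_zero_row:
  assumes "psd A" "A $ k $ k = 0"
  shows "A $ k $ j = 0"
proof (rule ccontr)
  assume nz: "A $ k $ j \<noteq> 0"
  define m where "m = (cmod (A $ k $ j))\<^sup>2"
  have "m > 0" using nz by (simp add: m_def)
  define t where "t = (Re (A $ j $ j) + 1) / (2 * m)"
  define c where "c = - complex_of_real t * A $ k $ j"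
  have c_Akj: "cnj c * A $ k $ j = - complex_of_real (t * m)"
    using complex_norm_square[of "A $ k $ j"]
    by (simp add: c_def m_def mult.commute mult.left_commute)
  moreover have "c * A $ j $ k = cnj (cnj c * A $ k $ j)"
    by (simp add: psd_hermitian[OF assms(1), of k j])
  ultimately have "Re (sesq A (axis k c + axis j 1) (axis k c + axis j 1)) = - 2 * t * m + Re (A $ j $ j)"
    using assms(2) unfolding sesq_add_diag sesq_axis_axis by simp
  also have "\<dots> = -1" using \<open>m > 0\<close> by (simp add: t_def field_simps)
  finally show False using psdD[OF assms(1), of "axis k c + axis j 1"] by simp
qed

lemma psd_outer: "psd (outer w)"
proof -
  have "sesq (outer w) x x = (\<Sum>i\<in>UNIV. cnj (x $ i) * w $ i) * cnj (\<Sum>i\<in>UNIV. cnj (x $ i) * w $ i)" for x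
    unfolding sesq_def outer_def sum_product cnj_sum by (simp add: mult_ac)
  then show ?thesis unfolding psd_def cquad_eq_sesq
    by (metis Im_complex_of_real Re_complex_of_real complex_norm_square zero_le_power2)
qed

lemma E11_eq_outer: "E11 = outer (axis first_idx 1)"
  by (simp add: E11_def outer_def vec_eq_iff axis_def)

lemma psd_E11: "psd E11"
  unfolding E11_eq_outer by (rule psd_outer)

lemma Re_ctrace_outer: "Re (ctrace (outer v)) = (\<Sum>i\<in>UNIV. (cmod (v $ i))\<^sup>2)"
proof -
  have "Re (z * cnj z) = (cmod z)\<^sup>2" for z
    using complex_norm_square[of z] by (metis Re_complex_of_real of_real_power)
  then show ?thesis by (simp add: ctrace_def outer_def)
qed

text \<open>Schur complement: \<open>x\<^sup>* B' x = y\<^sup>* B y\<close> for \<open>y = x - (\<gamma> / \<beta>) e\<^sub>k\<close>, \<open>\<gamma> = (B x)\<^sub>k\<close>.\<close>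
lemma psd_schur_complement:
  assumes B: "psd B" and \<beta>: "B $ k $ k = complex_of_real \<beta>" "\<beta> > 0"
  shows "psd (\<chi> i j. B $ i $ j - B $ i $ k * B $ k $ j / complex_of_real \<beta>)"
    (is "psd ?B'")
  unfolding psd_def cquad_eq_sesq
proof
  fix x
  define \<gamma> where "\<gamma> = (\<Sum>j\<in>UNIV. B $ k $ j * x $ j)"
  have cnj_\<gamma>: "(\<Sum>i\<in>UNIV. cnj (x $ i) * B $ i $ k) = cnj \<gamma>"
    unfolding \<gamma>_def by (simp add: psd_hermitian[OF B, of k] mult.commute)
  define \<alpha> where "\<alpha> = \<gamma> / complex_of_real \<beta>"
  have "sesq ?B' x x = sesq B x x
      - (\<Sum>i\<in>UNIV. \<Sum>j\<in>UNIV. cnj (x $ i) * (B $ i $ k * B $ k $ j / complex_of_real \<beta>) * x $ j)"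
    unfolding sesq_def by (simp add: algebra_simps sum_subtractf)
  also have "(\<Sum>i\<in>UNIV. \<Sum>j\<in>UNIV. cnj (x $ i) * (B $ i $ k * B $ k $ j / complex_of_real \<beta>) * x $ j)
      = cnj \<gamma> * \<gamma> / complex_of_real \<beta>"
    unfolding cnj_\<gamma>[symmetric] unfolding \<gamma>_def
    by (simp add: sum_distrib_left sum_distrib_right sum_divide_distrib algebra_simps)
  also have "sesq B x x - cnj \<gamma> * \<gamma> / complex_of_real \<beta>
      = sesq B x x - \<alpha> * cnj \<gamma> - cnj \<alpha> * \<gamma> + cnj \<alpha> * \<alpha> * complex_of_real \<beta>"
    using \<beta> by (simp add: \<alpha>_def field_simps)
  also have "\<dots> = sesq B (x + axis k (- \<alpha>)) (x + axis k (- \<alpha>))"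
    unfolding sesq_add_diag sesq_axis_axis unfolding sesq_axis_left sesq_axis_right
    by (simp add: \<gamma>_def[symmetric] cnj_\<gamma> \<beta>)
  finally show "Im (sesq ?B' x x) = 0 \<and> 0 \<le> Re (sesq ?B' x x)"
    using psdD[OF B] by simp
qed

text \<open>One step of a Cholesky decomposition.\<close>
lemma psd_split_outer:
  assumes B: "psd B" and Bkk: "B $ k $ k \<noteq> 0"
  obtains v B' where "B = B' + outer v" "psd B'" "\<And>j. B' $ k $ j = 0"
    "\<And>i j. (\<forall>l. B $ i $ l = 0) \<Longrightarrow> B' $ i $ j = 0"
proof -
  define \<beta> where "\<beta> = Re (B $ k $ k)"
  have \<beta>: "B $ k $ k = complex_of_real \<beta>" using psd_diag(1)[OF B] by (simp add: \<beta>_def)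
  have "\<beta> \<ge> 0" using psd_diag(2)[OF B, of k] by (simp add: \<beta>_def)
  moreover have "\<beta> \<noteq> 0" using Bkk \<beta> by auto
  ultimately have "\<beta> > 0" by simp
  define v where "v = (\<chi> i. B $ i $ k / complex_of_real (sqrt \<beta>))"
  define B' where "B' = (\<chi> i j. B $ i $ j - B $ i $ k * B $ k $ j / complex_of_real \<beta>)"
  have "outer v $ i $ j = B $ i $ k * B $ k $ j / complex_of_real \<beta>" for i j
    using \<open>\<beta> > 0\<close> psd_hermitian[OF B, of j k]
    by (simp add: outer_def v_def flip: of_real_mult)
  then have "B = B' + outer v" by (simp add: vec_eq_iff B'_def)
  moreover have "psd B'"
    unfolding B'_def by (rule psd_schur_complement[OF B \<beta> \<open>\<beta> > 0\<close>])
  moreover have "B' $ k $ j = 0" for j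
    using \<beta> \<open>\<beta> > 0\<close> by (simp add: B'_def)
  moreover have "B' $ i $ j = 0" if "\<forall>l. B $ i $ l = 0" for i j
    using that by (simp add: B'_def)
  ultimately show thesis by (rule that)
qed

section \<open>Unitarily invariant norms\<close>

lemma sum_sign_vectors_mult_eq_0:
  fixes i j :: "'n::finite"
  assumes "i \<noteq> j"
  shows "(\<Sum>e\<in>PiE UNIV (\<lambda>_. {1::complex, -1}). e i * e j) = 0"
proof -
  let ?S = "PiE (UNIV::'n set) (\<lambda>_. {1::complex, -1})"
  define flip where "flip e = e(i := - e i)" for e :: "'n \<Rightarrow> complex"
  have "(\<Sum>e\<in>?S. e i * e j) = (\<Sum>e\<in>?S. flip e i * flip e j)"
    by (rule sum.reindex_bij_witness[of _ flip flip]) (auto simp: flip_def PiE_iff)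
  also have "\<dots> = - (\<Sum>e\<in>?S. e i * e j)"
    using assms by (simp add: flip_def sum_negf)
  finally show ?thesis by simp
qed

locale ui_norm =
  fixes N :: "complex^('n::{finite,wellorder})^('n::{finite,wellorder}) \<Rightarrow> real"
  assumes unitarily_invariant: "unitarily_invariant_norm N"
begin

lemma N_nonneg: "N X \<ge> 0"
  using unitarily_invariant unfolding unitarily_invariant_norm_def by blast

lemma N_eq_0_iff: "N X = 0 \<longleftrightarrow> X = 0"
  using unitarily_invariant unfolding unitarily_invariant_norm_def by blast

lemma N_zero [simp]: "N 0 = 0"
  using N_eq_0_iff by simp

lemma N_scaleR: "N (c *\<^sub>R X) = \<bar>c\<bar> * N X"
  using unitarily_invariant unfolding unitarily_invariant_norm_def by blast

lemma N_triangle: "N (X + Y) \<le> N X + N Y"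
  using unitarily_invariant unfolding unitarily_invariant_norm_def by blast

lemma N_unitary: "unitary_mat U \<Longrightarrow> unitary_mat V \<Longrightarrow> N (U ** X ** V) = N X"
  using unitarily_invariant unfolding unitarily_invariant_norm_def by blast

lemma N_sum_le: "N (sum f S) \<le> (\<Sum>x\<in>S. N (f x))"
proof (induction S rule: infinite_finite_induct)
  case (insert x F)
  then show ?case using N_triangle[of "f x" "sum f F"] by simp
qed simp_all

text \<open>Pinching: the diagonal part of \<open>Y\<close> is the average of the unitary conjugates \<open>E Y E\<close>
  over the \<open>2\<^sup>n\<close> sign matrices \<open>E = diag(\<plusminus>1)\<close>.\<close>
lemma N_diag_le: "N (diag_mat (\<lambda>i. Y $ i $ i)) \<le> N Y"
proof -
  let ?S = "PiE (UNIV::'n set) (\<lambda>_. {1::complex, -1})"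
  have "finite ?S" by (simp add: finite_PiE)
  moreover have "(\<lambda>_. 1) \<in> ?S" by auto
  ultimately have "card ?S > 0" using card_gt_0_iff by blast
  have sign: "e i = 1 \<or> e i = -1" if "e \<in> ?S" for e i
    using that by (auto simp: PiE_iff)
  have unitary: "unitary_mat (diag_mat e)" if "e \<in> ?S" for e
    using sign[OF that] by (intro unitary_diag_mat) (metis norm_minus_cancel norm_one)
  have "(\<Sum>e\<in>?S. diag_mat e ** Y ** diag_mat e) $ i $ j
      = (real (card ?S) *\<^sub>R diag_mat (\<lambda>i. Y $ i $ i)) $ i $ j" for i j
  proof (cases "i = j")
    case True
    have sq: "e i * Y $ i $ i * e i = Y $ i $ i" if "e \<in> ?S" for e
      using sign[OF that, of i] by auto
    have "(\<Sum>e\<in>?S. e i * Y $ i $ i * e i) = (\<Sum>e\<in>?S. Y $ i $ i)"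
      by (rule sum.cong[OF refl], rule sq)
    then show ?thesis
      using True by (simp add: diag_mat_mult_left diag_mat_mult_right) (simp add: scaleR_conv_of_real)
  next
    case False
    have "(\<Sum>e\<in>?S. e i * Y $ i $ j * e j) = (\<Sum>e\<in>?S. e i * e j) * Y $ i $ j"
      by (simp add: sum_distrib_right) (simp add: mult_ac)
    then show ?thesis
      using False sum_sign_vectors_mult_eq_0[OF False]
      by (simp add: diag_mat_mult_left diag_mat_mult_right) (simp add: diag_mat_def)
  qed
  then have "(\<Sum>e\<in>?S. diag_mat e ** Y ** diag_mat e) = real (card ?S) *\<^sub>R diag_mat (\<lambda>i. Y $ i $ i)"
    by (simp add: vec_eq_iff)
  then have "real (card ?S) * N (diag_mat (\<lambda>i. Y $ i $ i))
      = N (\<Sum>e\<in>?S. diag_mat e ** Y ** diag_mat e)"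
    by (simp add: N_scaleR)
  also have "\<dots> \<le> (\<Sum>e\<in>?S. N (diag_mat e ** Y ** diag_mat e))"
    by (rule N_sum_le)
  also have "\<dots> = real (card ?S) * N Y"
    using unitary by (simp add: N_unitary)
  finally show ?thesis using \<open>card ?S > 0\<close> by simp
qed

text \<open>\<open>v v\<^sup>*\<close> is unitarily similar to \<open>\<parallel>v\<parallel>\<^sup>2 E\<^sub>1\<^sub>1\<close>: take a unitary \<open>U = diag(phases of v) Q\<close>
  with \<open>Q\<close> real orthogonal and \<open>Q e\<^sub>1 = |v| / \<parallel>v\<parallel>\<close>.\<close>
lemma N_outer: "N (outer v) = (\<Sum>i\<in>UNIV. (cmod (v $ i))\<^sup>2) * N E11"
proof -
  define r where "r = (\<chi> i. cmod (v $ i))"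
  define \<rho> where "\<rho> = norm r"
  have \<rho>_sq: "\<rho>\<^sup>2 = (\<Sum>i\<in>UNIV. (cmod (v $ i))\<^sup>2)"
    by (simp add: \<rho>_def r_def norm_vec_def L2_set_def sum_nonneg)
  show ?thesis
  proof (cases "\<rho> = 0")
    case True
    then have "v = 0" by (simp add: \<rho>_def r_def vec_eq_iff)
    then have "outer v = 0" by (simp add: outer_def vec_eq_iff)
    then show ?thesis by (simp add: \<open>v = 0\<close>)
  next
    case False
    then have "\<rho> > 0" by (simp add: \<rho>_def)
    define a where "a = (1 / \<rho>) *\<^sub>R r"
    have "norm a = 1" using \<open>\<rho> > 0\<close> by (simp add: a_def \<rho>_def)
    then obtain Q where Q: "orthogonal_matrix Q" "Q *v axis first_idx 1 = a"
      using orthogonal_matrix_exists_basis by blast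
    have Q_first: "Q $ i $ first_idx = a $ i" for i
    proof -
      have "(Q *v axis first_idx 1) $ i = Q $ i $ first_idx"
        unfolding matrix_vector_mult_def
        by (simp, subst sum_UNIV_single[where k = first_idx]) (auto simp: axis_def)
      then show ?thesis using Q by simp
    qed
    obtain p where p: "\<And>i. cmod (p i) = 1" "\<And>i. v $ i = p i * complex_of_real (r $ i)"
      using exists_unit_phase[of "v $ _"] unfolding r_def by (metis vec_lambda_beta)
    define U where "U = diag_mat p ** of_real_mat Q"
    have "unitary_mat U"
      unfolding U_def by (intro unitary_mult unitary_diag_mat unitary_of_real_mat Q p)
    have U_first: "U $ i $ first_idx = v $ i / complex_of_real \<rho>" for i
      using \<open>\<rho> > 0\<close> by (simp add: U_def diag_mat_mult_left of_real_mat_def Q_first a_def p)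
    define e where "e b = (if b = first_idx then complex_of_real (\<rho>\<^sup>2) else 0)" for b :: 'n
    have "diag_mat e = \<rho>\<^sup>2 *\<^sub>R E11"
      by (simp add: e_def diag_mat_def E11_def vec_eq_iff of_real_def)
    moreover have "outer v = U ** diag_mat e ** adj U"
    proof -
      have "(U ** diag_mat e ** adj U) $ i $ j = U $ i $ first_idx * e first_idx * cnj (U $ j $ first_idx)" for i j
        unfolding mult_diag_mat_mult_adj_nth by (rule sum_UNIV_single) (simp add: e_def)
      then show ?thesis
        using \<open>\<rho> > 0\<close> by (simp add: vec_eq_iff outer_def U_first e_def power2_eq_square)
    qed
    ultimately have "N (outer v) = \<rho>\<^sup>2 * N E11"
      using N_unitary[OF \<open>unitary_mat U\<close> unitary_adj[OF \<open>unitary_mat U\<close>]] by (simp add: N_scaleR)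
    then show ?thesis by (simp add: \<rho>_sq)
  qed
qed

lemma N_psd_le_trace_rows:
  assumes "finite S" "psd B" "\<And>i j. B $ i $ j \<noteq> 0 \<Longrightarrow> i \<in> S"
  shows "N B \<le> Re (ctrace B) * N E11"
  using assms
proof (induction S arbitrary: B rule: finite_induct)
  case empty
  then have "B $ i $ j = 0" for i j by blast
  then have "B = 0" by (simp add: vec_eq_iff)
  then show ?case by (simp add: ctrace_def N_eq_0_iff)
next
  case (insert k S)
  show ?case
  proof (cases "B $ k $ k = 0")
    case True
    then have "B $ k $ j = 0" for j by (rule psd_zero_row[OF insert.prems(1)])
    then have "B $ i $ j \<noteq> 0 \<Longrightarrow> i \<in> S" for i j using insert.prems(2) by fastforce
    then show ?thesis by (rule insert.IH[OF insert.prems(1)])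
  next
    case False
    then obtain v B' where split: "B = B' + outer v" "psd B'" "\<And>j. B' $ k $ j = 0"
      "\<And>i j. (\<forall>l. B $ i $ l = 0) \<Longrightarrow> B' $ i $ j = 0"
      using psd_split_outer[OF insert.prems(1)] by metis
    have "B' $ i $ j \<noteq> 0 \<Longrightarrow> i \<in> S" for i j
      using split(3,4) insert.prems(2) by (metis insertE)
    then have "N B' \<le> Re (ctrace B') * N E11" by (rule insert.IH[OF split(2)])
    moreover have "N B \<le> N B' + N (outer v)" unfolding split(1) by (rule N_triangle)
    moreover have "Re (ctrace B) = Re (ctrace B') + Re (ctrace (outer v))"
      unfolding split(1) by (simp add: ctrace_def sum.distrib)
    ultimately show ?thesis by (simp add: N_outer Re_ctrace_outer algebra_simps)
  qed
qed

lemma N_psd_le_trace: "psd B \<Longrightarrow> N B \<le> Re (ctrace B) * N E11"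
  by (rule N_psd_le_trace_rows[of UNIV]) simp_all

end

section \<open>Symmetric gauge functions and their duals\<close>

locale sym_gauge =
  fixes \<Phi> :: "real^'n::finite \<Rightarrow> real"
  assumes symmetric_gauge: "symmetric_gauge_function \<Phi>"
begin

lemma G_nonneg: "\<Phi> x \<ge> 0"
  using symmetric_gauge unfolding symmetric_gauge_function_def by blast

lemma G_eq_0_iff: "\<Phi> x = 0 \<longleftrightarrow> x = 0"
  using symmetric_gauge unfolding symmetric_gauge_function_def by blast

lemma G_zero [simp]: "\<Phi> 0 = 0"
  using G_eq_0_iff by simp

lemma G_scaleR: "\<Phi> (c *\<^sub>R x) = \<bar>c\<bar> * \<Phi> x"
  using symmetric_gauge unfolding symmetric_gauge_function_def by blast

lemma G_triangle: "\<Phi> (x + y) \<le> \<Phi> x + \<Phi> y"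
  using symmetric_gauge unfolding symmetric_gauge_function_def by blast

lemma G_sign: "(\<forall>i. e $ i = 1 \<or> e $ i = -1) \<Longrightarrow> \<Phi> (\<chi> i. e $ i * x $ i) = \<Phi> x"
  using symmetric_gauge unfolding symmetric_gauge_function_def by blast

lemma G_abs: "\<Phi> (\<chi> i. \<bar>y $ i\<bar>) = \<Phi> y"
proof -
  define e where "e = (\<chi> i. if y $ i \<ge> 0 then 1 else (-1::real))"
  have "(\<chi> i. e $ i * y $ i) = (\<chi> i. \<bar>y $ i\<bar>)"
    by (auto simp: e_def vec_eq_iff)
  then show ?thesis using G_sign[of e y] by (simp add: e_def)
qed

lemma G_axis_pos: "\<Phi> (axis i 1) > 0"
  using G_nonneg G_eq_0_iff[of "axis i 1"] by (simp add: less_le axis_eq_0_iff)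

text \<open>Flipping the signs of all coordinates but the \<open>i\<close>-th and adding \<open>y\<close> gives \<open>2 y\<^sub>i e\<^sub>i\<close>.\<close>
lemma abs_component_le: "\<bar>y $ i\<bar> * \<Phi> (axis i 1) \<le> \<Phi> y"
proof -
  define e where "e = (\<chi> j. if j = i then 1 else (-1::real))"
  have "y + (\<chi> j. e $ j * y $ j) = (2 * y $ i) *\<^sub>R axis i 1"
    by (auto simp: e_def vec_eq_iff axis_def)
  then have "2 * \<bar>y $ i\<bar> * \<Phi> (axis i 1) \<le> \<Phi> y + \<Phi> (\<chi> j. e $ j * y $ j)"
    using G_triangle[of y "\<chi> j. e $ j * y $ j"] by (simp add: G_scaleR abs_mult)
  then show ?thesis using G_sign[of e y] by (simp add: e_def)
qed

lemma dual_gauge_set_bdd: "bdd_above {\<bar>x \<bullet> y\<bar> | y. \<Phi> y \<le> 1}"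
proof (rule bdd_aboveI)
  fix z assume "z \<in> {\<bar>x \<bullet> y\<bar> | y. \<Phi> y \<le> 1}"
  then obtain y where z: "z = \<bar>x \<bullet> y\<bar>" and y: "\<Phi> y \<le> 1" by blast
  have "\<bar>x \<bullet> y\<bar> \<le> (\<Sum>i\<in>UNIV. \<bar>x $ i\<bar> * \<bar>y $ i\<bar>)"
    unfolding inner_vec_def inner_real_def abs_mult[symmetric] by (rule sum_abs)
  also have "\<dots> \<le> (\<Sum>i\<in>UNIV. \<bar>x $ i\<bar> / \<Phi> (axis i 1))"
  proof (rule sum_mono)
    fix i
    have "\<bar>y $ i\<bar> * \<Phi> (axis i 1) \<le> 1" using abs_component_le[of y i] y by linarith
    then show "\<bar>x $ i\<bar> * \<bar>y $ i\<bar> \<le> \<bar>x $ i\<bar> / \<Phi> (axis i 1)"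
      using G_axis_pos[of i] by (simp add: le_divide_eq mult_left_le mult.assoc)
  qed
  finally show "z \<le> (\<Sum>i\<in>UNIV. \<bar>x $ i\<bar> / \<Phi> (axis i 1))" using z by simp
qed

lemma abs_inner_le_dual_gauge: "\<Phi> y \<le> 1 \<Longrightarrow> \<bar>x \<bullet> y\<bar> \<le> dual_gauge \<Phi> x"
  unfolding dual_gauge_def by (rule cSup_upper[OF _ dual_gauge_set_bdd]) blast

lemma dual_gauge_nonneg: "dual_gauge \<Phi> x \<ge> 0"
  using abs_inner_le_dual_gauge[of 0 x] by simp

lemma abs_inner_le_dual_gauge_mult: "\<bar>x \<bullet> y\<bar> \<le> dual_gauge \<Phi> x * \<Phi> y"
proof (cases "y = 0")
  case False
  then have "\<Phi> y > 0" using G_nonneg G_eq_0_iff by (simp add: less_le)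
  then have "\<bar>x \<bullet> ((1 / \<Phi> y) *\<^sub>R y)\<bar> \<le> dual_gauge \<Phi> x"
    by (intro abs_inner_le_dual_gauge) (simp add: G_scaleR)
  then show ?thesis using \<open>\<Phi> y > 0\<close> by (simp add: abs_mult divide_le_eq mult.commute)
qed simp

lemma dual_gauge_le: "(\<And>y. \<Phi> y \<le> 1 \<Longrightarrow> \<bar>x \<bullet> y\<bar> \<le> c) \<Longrightarrow> dual_gauge \<Phi> x \<le> c"
  unfolding dual_gauge_def by (rule cSup_least) (auto intro: exI[of _ 0])

lemma dual_gauge_pos:
  assumes "x \<noteq> 0"
  shows "dual_gauge \<Phi> x > 0"
proof -
  obtain i where "x $ i \<noteq> 0" using assms by (auto simp: vec_eq_iff)
  define y where "y = (1 / \<Phi> (axis i 1)) *\<^sub>R axis i (1::real)"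
  have "\<Phi> y = 1"
    using G_axis_pos[of i] by (simp add: y_def G_scaleR)
  then have "\<bar>x \<bullet> y\<bar> \<le> dual_gauge \<Phi> x"
    by (intro abs_inner_le_dual_gauge) simp
  moreover have "\<bar>x \<bullet> y\<bar> > 0"
    using \<open>x $ i \<noteq> 0\<close> G_axis_pos[of i] by (simp add: y_def inner_axis)
  ultimately show ?thesis by linarith
qed

lemma dual_gauge_inverse_pos:
  assumes "\<And>i. d $ i > 0"
  shows "dual_gauge \<Phi> (\<chi> i. inverse (d $ i)) > 0"
proof (rule dual_gauge_pos)
  have "(\<chi> i. inverse (d $ i)) $ i \<noteq> 0" for i using assms[of i] by simp
  then show "(\<chi> i. inverse (d $ i)) \<noteq> 0" by (metis zero_index)
qed

end

section \<open>Norms given by a symmetric gauge function\<close>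

locale gauge_norm = ui_norm N + sym_gauge \<Phi>
  for N :: "complex^('n::{finite,wellorder})^('n::{finite,wellorder}) \<Rightarrow> real"
    and \<Phi> :: "real^('n::{finite,wellorder}) \<Rightarrow> real" +
  assumes gauge_of_norm: "gauge_of_norm N \<Phi>"
    and N_E11: "N E11 = 1"
begin

lemma N_diag_mat: "N (diag_mat d) = \<Phi> (\<chi> i. cmod (d i))"
proof -
  obtain p where p: "\<And>i. cmod (p i) = 1" "\<And>i. d i = p i * complex_of_real (cmod (d i))"
    using exists_unit_phase[of "d _"] by metis
  have "diag_mat d = diag_mat p ** cdiag (\<chi> i. cmod (d i)) ** mat 1"
    unfolding cdiag_eq_diag_mat diag_mat_mult_diag_mat matrix_mul_rid
    by (simp flip: p(2))
  moreover have "unitary_mat (diag_mat p)" using p(1) by (rule unitary_diag_mat)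
  moreover have "\<forall>i. (\<chi> i. cmod (d i)) $ i \<ge> 0" by simp
  ultimately have "is_singular_values (\<chi> i. cmod (d i)) (diag_mat d)"
    unfolding is_singular_values_def using unitary_mat_one by blast
  then show ?thesis using gauge_of_norm unfolding gauge_of_norm_def by blast
qed

lemma abs_trace_cdiag_le:
  assumes "\<And>i. x $ i \<ge> 0"
  shows "cmod (ctrace (cdiag x ** adj Y)) \<le> dual_gauge \<Phi> x * N Y"
proof -
  define r where "r = (\<chi> i. cmod (Y $ i $ i))"
  have "cmod (ctrace (cdiag x ** adj Y)) \<le> (\<Sum>i\<in>UNIV. cmod (complex_of_real (x $ i) * cnj (Y $ i $ i)))"
    unfolding cdiag_eq_diag_mat ctrace_diag_mat_mult_adj by (rule norm_sum)
  also have "\<dots> = x \<bullet> r"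
    using assms by (simp add: inner_vec_def r_def norm_mult)
  also have "\<dots> \<le> dual_gauge \<Phi> x * \<Phi> r"
    using abs_inner_le_dual_gauge_mult[of x r] by linarith
  also have "\<Phi> r = N (diag_mat (\<lambda>i. Y $ i $ i))"
    by (simp add: N_diag_mat r_def)
  also have "dual_gauge \<Phi> x * \<dots> \<le> dual_gauge \<Phi> x * N Y"
    by (rule mult_left_mono[OF N_diag_le dual_gauge_nonneg])
  finally show ?thesis .
qed

lemma dual_mat_norm_cdiag:
  assumes "\<And>i. x $ i \<ge> 0"
  shows "dual_mat_norm N (cdiag x) = dual_gauge \<Phi> x"
proof (rule antisym)
  let ?T = "{cmod (ctrace (cdiag x ** adj Y)) | Y. N Y \<le> 1}"
  have T_le: "t \<le> dual_gauge \<Phi> x" if t: "t \<in> ?T" for t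
  proof -
    obtain Y where "t = cmod (ctrace (cdiag x ** adj Y))" "N Y \<le> 1" using t by blast
    then show ?thesis
      using order_trans[OF abs_trace_cdiag_le[OF assms] mult_left_le[OF _ dual_gauge_nonneg]] by blast
  qed
  then show "dual_mat_norm N (cdiag x) \<le> dual_gauge \<Phi> x"
    unfolding dual_mat_norm_def by (intro cSup_least) (auto intro: exI[of _ 0])
  show "dual_gauge \<Phi> x \<le> dual_mat_norm N (cdiag x)"
  proof (rule dual_gauge_le)
    fix y assume "\<Phi> y \<le> 1"
    then have "N (cdiag y) \<le> 1"
      by (simp add: cdiag_eq_diag_mat N_diag_mat G_abs)
    moreover have "ctrace (cdiag x ** adj (cdiag y)) = complex_of_real (x \<bullet> y)"
      by (simp add: cdiag_eq_diag_mat ctrace_diag_mat_mult_adj inner_vec_def)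
    then have "\<bar>x \<bullet> y\<bar> = cmod (ctrace (cdiag x ** adj (cdiag y)))" by simp
    ultimately have "\<bar>x \<bullet> y\<bar> \<in> ?T" by blast
    then show "\<bar>x \<bullet> y\<bar> \<le> dual_mat_norm N (cdiag x)"
      unfolding dual_mat_norm_def by (rule cSup_upper[OF _ bdd_aboveI[OF T_le]])
  qed
qed

text \<open>The diagonal of \<open>M \<circ> B\<close> is \<open>D\<close> times that of \<open>B\<close>, so \<open>tr B\<close> is the pairing of
  \<open>D\<^sup>-\<^sup>1\<close> with \<open>M \<circ> B\<close>.\<close>
lemma norm_le_dual_gauge_mult_hadamard:
  assumes "psd B" "\<And>i. M $ i $ i = complex_of_real (d $ i)" "\<And>i. d $ i > 0"
  shows "N B \<le> dual_gauge \<Phi> (\<chi> i. inverse (d $ i)) * N (hadamard M B)"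
proof -
  have "complex_of_real (inverse (d $ i)) * cnj (hadamard M B $ i $ i) = cnj (B $ i $ i)" for i
    using assms(2)[of i] assms(3)[of i] by (simp add: hadamard_def field_simps)
  then have "ctrace (cdiag (\<chi> i. inverse (d $ i)) ** adj (hadamard M B)) = cnj (ctrace B)"
    unfolding cdiag_eq_diag_mat ctrace_diag_mat_mult_adj by (simp add: ctrace_def cnj_sum)
  then have "Re (ctrace B) \<le> cmod (ctrace (cdiag (\<chi> i. inverse (d $ i)) ** adj (hadamard M B)))"
    using complex_Re_le_cmod[of "cnj (ctrace B)"] by simp
  also have "\<dots> \<le> dual_gauge \<Phi> (\<chi> i. inverse (d $ i)) * N (hadamard M B)"
    using assms(3) by (intro abs_trace_cdiag_le) (simp add: less_imp_le)
  finally show ?thesis using N_psd_le_trace[OF assms(1)] N_E11 by simp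
qed

text \<open>The extremal \<open>B\<close> is \<open>w w\<^sup>*\<close> with \<open>|w\<^sub>i|\<^sup>2 = |y\<^sub>i| / (\<sigma> d\<^sub>i)\<close>, \<open>\<sigma> = \<Sum>\<^sub>i |y\<^sub>i| / d\<^sub>i\<close>,
  for which \<open>D \<circ> B = diag |y| / \<sigma>\<close>.\<close>
lemma exists_psd_hadamard_cdiag_le:
  assumes d: "\<And>i. d $ i > 0" and y: "\<Phi> y \<le> 1"
    and nz: "(\<chi> i. inverse (d $ i)) \<bullet> y \<noteq> 0"
  obtains B where "psd B" "N B = 1"
    "N (hadamard (cdiag d) B) \<le> 1 / \<bar>(\<chi> i. inverse (d $ i)) \<bullet> y\<bar>"
proof -
  let ?x = "\<chi> i. inverse (d $ i)"
  define r where "r = (\<chi> i. \<bar>y $ i\<bar>)"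
  define \<sigma> where "\<sigma> = ?x \<bullet> r"
  have le_\<sigma>: "\<bar>?x \<bullet> y\<bar> \<le> \<sigma>"
  proof -
    have "\<bar>?x \<bullet> y\<bar> \<le> (\<Sum>i\<in>UNIV. \<bar>?x $ i * y $ i\<bar>)"
      unfolding inner_vec_def inner_real_def by (rule sum_abs)
    also have "\<dots> = \<sigma>"
      using d by (simp add: \<sigma>_def inner_vec_def r_def abs_mult less_imp_le)
    finally show ?thesis .
  qed
  with nz have "\<sigma> > 0" by linarith
  define w where "w = (\<chi> i. complex_of_real (sqrt (\<bar>y $ i\<bar> / d $ i / \<sigma>)))"
  have w_sq: "w $ i * cnj (w $ i) = complex_of_real (\<bar>y $ i\<bar> / d $ i / \<sigma>)" for i
    using d[of i] \<open>\<sigma> > 0\<close> by (simp add: w_def flip: of_real_mult)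
  have "N (outer w) = (\<Sum>i\<in>UNIV. \<bar>y $ i\<bar> / d $ i / \<sigma>)"
    using d \<open>\<sigma> > 0\<close> by (simp add: N_outer N_E11 w_def less_imp_le)
  also have "\<dots> = \<sigma> / \<sigma>"
    unfolding sum_divide_distrib[symmetric] by (simp add: \<sigma>_def inner_vec_def r_def field_simps)
  also have "\<dots> = 1"
    using \<open>\<sigma> > 0\<close> by simp
  finally have "N (outer w) = 1" .
  have "complex_of_real (d $ i) * (w $ i * cnj (w $ i)) = complex_of_real (\<bar>y $ i\<bar> / \<sigma>)" for i
    unfolding w_sq of_real_mult[symmetric]
    by (rule arg_cong[where f = complex_of_real]) (use d[of i] in \<open>simp add: field_simps\<close>)
  then have "hadamard (cdiag d) (outer w) = diag_mat (\<lambda>i. complex_of_real (\<bar>y $ i\<bar> / \<sigma>))"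
    by (auto simp: vec_eq_iff hadamard_def cdiag_def diag_mat_def outer_def)
  then have "N (hadamard (cdiag d) (outer w)) = \<Phi> (\<chi> i. cmod (complex_of_real (\<bar>y $ i\<bar> / \<sigma>)))"
    by (simp only: N_diag_mat)
  also have "(\<chi> i. cmod (complex_of_real (\<bar>y $ i\<bar> / \<sigma>))) = (1 / \<sigma>) *\<^sub>R r"
    using \<open>\<sigma> > 0\<close> by (simp add: r_def vec_eq_iff norm_divide)
  also have "\<Phi> ((1 / \<sigma>) *\<^sub>R r) = \<Phi> y / \<sigma>"
    using \<open>\<sigma> > 0\<close> by (simp add: G_scaleR r_def G_abs)
  also have "\<dots> \<le> 1 / \<bar>?x \<bullet> y\<bar>"
    using y \<open>\<sigma> > 0\<close> le_\<sigma> nz by (simp add: frac_le)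
  finally show thesis
    using that[OF psd_outer \<open>N (outer w) = 1\<close>] by blast
qed

lemma I_NA_ge:
  assumes "\<And>i. M $ i $ i = complex_of_real (d $ i)" "\<And>i. d $ i > 0"
  shows "inverse (dual_gauge \<Phi> (\<chi> i. inverse (d $ i))) \<le> I_NA N M"
  unfolding I_NA_def
proof (rule cInf_greatest)
  show "{N (hadamard M B) |B. psd B \<and> N B = 1} \<noteq> {}"
    using psd_E11 N_E11 by blast
next
  fix t assume "t \<in> {N (hadamard M B) |B. psd B \<and> N B = 1}"
  then obtain B where "psd B" "N B = 1" "t = N (hadamard M B)" by blast
  moreover have "dual_gauge \<Phi> (\<chi> i. inverse (d $ i)) > 0"
    using assms(2) by (rule dual_gauge_inverse_pos)
  moreover note norm_le_dual_gauge_mult_hadamard[OF \<open>psd B\<close> assms]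
  ultimately show "inverse (dual_gauge \<Phi> (\<chi> i. inverse (d $ i))) \<le> t"
    by (simp add: inverse_eq_divide divide_le_eq mult.commute)
qed

lemma I_NA_cdiag:
  assumes d: "\<And>i. d $ i > 0"
  shows "I_NA N (cdiag d) = inverse (dual_gauge \<Phi> (\<chi> i. inverse (d $ i)))"
proof -
  let ?x = "\<chi> i. inverse (d $ i)"
  have "\<And>i. cdiag d $ i $ i = complex_of_real (d $ i)" by (simp add: cdiag_def)
  note lower = I_NA_ge[OF this d]
  have "dual_gauge \<Phi> ?x > 0"
    using d by (rule dual_gauge_inverse_pos)
  with lower have "I_NA N (cdiag d) > 0" by (meson inverse_positive_iff_positive less_le_trans)
  have "dual_gauge \<Phi> ?x \<le> inverse (I_NA N (cdiag d))"
  proof (rule dual_gauge_le)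
    fix y assume y: "\<Phi> y \<le> 1"
    show "\<bar>?x \<bullet> y\<bar> \<le> inverse (I_NA N (cdiag d))"
    proof (cases "?x \<bullet> y = 0")
      case False
      then obtain B where B: "psd B" "N B = 1" "N (hadamard (cdiag d) B) \<le> 1 / \<bar>?x \<bullet> y\<bar>"
        using exists_psd_hadamard_cdiag_le[OF d y] by blast
      then have "I_NA N (cdiag d) \<le> 1 / \<bar>?x \<bullet> y\<bar>"
        unfolding I_NA_def
        by (intro cInf_lower[THEN order_trans]) (auto intro: bdd_belowI[of _ 0] N_nonneg)
      then show ?thesis
        using \<open>I_NA N (cdiag d) > 0\<close> False by (simp add: field_simps)
    qed (use \<open>I_NA N (cdiag d) > 0\<close> in simp)
  qed
  then have "I_NA N (cdiag d) \<le> inverse (dual_gauge \<Phi> ?x)"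
    using \<open>I_NA N (cdiag d) > 0\<close> \<open>dual_gauge \<Phi> ?x > 0\<close> by (simp add: field_simps)
  with lower show ?thesis by simp
qed

end

theorem mainTheorem19:
  fixes A :: "complex^('n::{finite,wellorder})^('n::{finite,wellorder})"
    and N :: "complex^('n::{finite,wellorder})^('n::{finite,wellorder}) \<Rightarrow> real"
    and \<Phi> :: "real^('n::{finite,wellorder}) \<Rightarrow> real"
  assumes "psd A"
    and "\<forall>i. Re (A $ i $ i) > 0"
    and "unitarily_invariant_norm N"
    and "N E11 = 1"
    and "symmetric_gauge_function \<Phi>"
    and "gauge_of_norm N \<Phi>"
  shows "I_NA N A \<ge> I_NA N (diag_part A)
    \<and> I_NA N (diag_part A) = inverse (dual_mat_norm N (matrix_inv (diag_part A)))
    \<and> inverse (dual_mat_norm N (matrix_inv (diag_part A)))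
        = inverse (dual_gauge \<Phi> (\<chi> i. inverse (Re (A $ i $ i))))
    \<and> inverse (dual_gauge \<Phi> (\<chi> i. inverse (Re (A $ i $ i)))) > 0"
proof -
  interpret gauge_norm N \<Phi>
    using assms(3-6) by unfold_locales
  define d where "d = (\<chi> i. Re (A $ i $ i))"
  have d_pos: "\<And>i. d $ i > 0" using assms(2) by (simp add: d_def)
  have A_diag: "\<And>i. A $ i $ i = complex_of_real (d $ i)"
    using psd_diag(1)[OF assms(1)] by (simp add: d_def)
  have D: "diag_part A = cdiag d" using diag_part_psd[OF assms(1)] by (simp add: d_def)
  have D_inv: "matrix_inv (cdiag d) = cdiag (\<chi> i. inverse (d $ i))"
    using d_pos by (intro matrix_inv_cdiag) (simp add: less_imp_neq[symmetric])
  have "dual_mat_norm N (cdiag (\<chi> i. inverse (d $ i))) = dual_gauge \<Phi> (\<chi> i. inverse (d $ i))"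
    using d_pos by (intro dual_mat_norm_cdiag) (simp add: less_imp_le)
  moreover have "dual_gauge \<Phi> (\<chi> i. inverse (d $ i)) > 0"
    using d_pos by (rule dual_gauge_inverse_pos)
  ultimately show ?thesis
    using I_NA_ge[OF A_diag d_pos] I_NA_cdiag[OF d_pos] unfolding D D_inv
    by (simp add: d_def)
qed

end
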